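(* Let $m\ge2$ and let $A(\mathbf z)$, $\mathbf z=(z_1,\dots,z_m)$, be the $(2m+1)\times(2m+1)$ matrix whose rows and columns are indexed, in this order, by $s_0,s_1,\dots,s_m,s_1^{-1},\dots,s_m^{-1}$, with entries: column $s_0$ is zero; row $s_0$ has entry $z_j$ in columns $s_j$ and $s_j^{-1}$ ($1\le j\le m$); row $s_i$ ($1\le i\le m$) has entry $z_j$ in column $s_j$ for all $j$, entry $z_j$ in column $s_j^{-1}$ for $j\ne i$, and $0$ in column $s_i^{-1}$; row $s_i^{-1}$ has entry $z_j$ in column $s_j^{-1}$ for all $j$, entry $z_j$ in column $s_j$ for $j\ne i$, and $0$ in column $s_i$. Then, as a polynomial identity, $$\det(I-A(\mathbf z))=(1-z_1)\cdots(1-z_m)\,R(\mathbf z),\qquad R(\mathbf z)=1-\sum_{l=1}^{m}(2l-1)\sum_{1\le i_1<\dots<i_l\le m} z_{i_1}\cdots z_{i_l},$$ where $I$ is the $(2m+1)\times(2m+1)$ identity matrix. *)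

theory Defs
  imports "Jordan_Normal_Form.Determinant"
begin

text \<open>Indexing convention: row/column 0 is s_0; index k with 1 \<le> k \<le> m is s_k;
  index m + k with 1 \<le> k \<le> m is s_k^{-1}.  The variables are z 1, ..., z m.\<close>

definition gen_idx :: "nat \<Rightarrow> nat \<Rightarrow> nat" where
  "gen_idx m c = (if c \<le> m then c else c - m)"

definition is_pos :: "nat \<Rightarrow> nat \<Rightarrow> bool" where
  "is_pos m c \<longleftrightarrow> 1 \<le> c \<and> c \<le> m"

definition A_entry :: "nat \<Rightarrow> (nat \<Rightarrow> 'a::comm_ring_1) \<Rightarrow> nat \<Rightarrow> nat \<Rightarrow> 'a" where
  "A_entry m z r c =
     (if c = 0 then 0
      else if r = 0 then z (gen_idx m c)
      else if gen_idx m r = gen_idx m c \<and> is_pos m r \<noteq> is_pos m c then 0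
      else z (gen_idx m c))"

definition A_mat :: "nat \<Rightarrow> (nat \<Rightarrow> 'a::comm_ring_1) \<Rightarrow> 'a mat" where
  "A_mat m z = mat (2*m+1) (2*m+1) (\<lambda>(r, c). A_entry m z r c)"

definition R_poly :: "nat \<Rightarrow> (nat \<Rightarrow> 'a::comm_ring_1) \<Rightarrow> 'a" where
  "R_poly m z = 1 - (\<Sum>l = 1..m. of_nat (2*l - 1) *
       (\<Sum>S \<in> {S. S \<subseteq> {1..m} \<and> card S = l}. \<Prod>i\<in>S. z i))"

end

theory Submission
  imports Defs
begin

text \<open>
  Adding row s_i^-1 to row s_i and then subtracting column s_j from column s_j^-1, both
  unitriangular operations, turns I - A(z) into a block lower triangular matrix whose diagonal
  blocks are diag(1 - z_j) (on the s_j^-1) and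
  X = diag(1, 1 + z_1, ..., 1 + z_m) - (1, 2, ..., 2)^T (0, z_1, ..., z_m).
  A diagonal matrix minus a rank-one matrix has determinant
  prod_i d_i - sum_k u_k v_k prod_{i != k} d_i, so det X = prod_i (1 + z_i) - 2 sum_k z_k prod_{i != k} (1 + z_i);
  expanding the products, the monomial prod_{i in S} z_i gets the coefficient 1 - 2|S|, which gives R(z).
  Since there is no division, the block triangular matrix is written as the product of X
  (extended by the identity) and a lower triangular matrix.
\<close>

lemma index_mult_mat_sum:
  assumes "A \<in> carrier_mat n n" "B \<in> carrier_mat n n" "i < n" "j < n"
  shows "(A * B) $$ (i,j) = (\<Sum>k<n. A $$ (i,k) * B $$ (k,j))"
  using assms by (auto simp: scalar_prod_def lessThan_atLeast0 intro!: sum.cong)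

lemma det_upper_triangular_prod:
  assumes "\<And>i j. j < i \<Longrightarrow> i < n \<Longrightarrow> A $$ (i,j) = 0" "A \<in> carrier_mat n n"
  shows "det A = (\<Prod>i<n. A $$ (i,i))"
  using det_upper_triangular[of A n] assms
  by (auto simp: upper_triangular_def prod_list_diag_prod lessThan_atLeast0)

lemma det_lower_triangular_prod:
  assumes "\<And>i j. i < j \<Longrightarrow> j < n \<Longrightarrow> A $$ (i,j) = 0" "A \<in> carrier_mat n n"
  shows "det A = (\<Prod>i<n. A $$ (i,i))"
  using det_lower_triangular[of n A] assms
  by (auto simp: prod_list_diag_prod lessThan_atLeast0)

lemma det_row_additive:
  assumes A: "A \<in> carrier_mat n n" and B: "B \<in> carrier_mat n n" and C: "C \<in> carrier_mat n n"
    and k: "k < n"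
    and other_rows: "\<And>i j. i < n \<Longrightarrow> j < n \<Longrightarrow> i \<noteq> k \<Longrightarrow> B $$ (i,j) = A $$ (i,j) \<and> C $$ (i,j) = A $$ (i,j)"
    and row_k: "\<And>j. j < n \<Longrightarrow> A $$ (k,j) = B $$ (k,j) + C $$ (k,j)"
  shows "det A = det B + det C"
proof -
  have "cofactor B k j = cofactor A k j \<and> cofactor C k j = cofactor A k j" for j
  proof -
    have "mat_delete B k j = mat_delete A k j \<and> mat_delete C k j = mat_delete A k j"
      using A B C other_rows unfolding mat_delete_def by (auto intro!: eq_matI)
    then show ?thesis unfolding cofactor_def by simp
  qed
  then show ?thesis
    using laplace_expansion_row[OF A k] laplace_expansion_row[OF B k] laplace_expansion_row[OF C k]
    by (simp add: row_k distrib_right sum.distrib)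
qed

lemma det_diag_rank_one_last_row:
  fixes d u v :: "nat \<Rightarrow> 'a::comm_ring_1"
  shows "det (mat (Suc n) (Suc n) (\<lambda>(i,j). if i = n then - u n * v j
            else (if i = j then d i else 0) - u i * v j))
     = - u n * ((\<Prod>i<n. d i) * v n)"
proof -
  let ?C = "mat (Suc n) (Suc n) (\<lambda>(i,j). if i = n then - u n * v j
            else (if i = j then d i else 0) - u i * v j)"
  define E :: "'a mat" where "E = mat (Suc n) (Suc n)
    (\<lambda>(i,j). if i = j then (if i = n then - u n else 1) else if j = n then - u i else 0)"
  define T :: "'a mat" where "T = mat (Suc n) (Suc n)
    (\<lambda>(i,j). if i = n then v j else if i = j then d i else 0)"
  have "?C = E * T"
  proof (rule eq_matI)
    fix i j assume "i < dim_row (E * T)" "j < dim_col (E * T)"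
    hence i: "i < Suc n" and j: "j < Suc n" by (auto simp: E_def T_def)
    have "(E * T) $$ (i,j) = (\<Sum>k<Suc n. E $$ (i,k) * T $$ (k,j))"
      by (rule index_mult_mat_sum[OF _ _ i j]) (auto simp: E_def T_def)
    also have "\<dots> = ?C $$ (i,j)"
    proof (cases "i = n")
      case True
      then show ?thesis using j by (subst sum.remove[of _ n]) (auto simp: E_def T_def)
    next
      case False
      then have "(\<Sum>k<Suc n. E $$ (i,k) * T $$ (k,j)) = E $$ (i,i) * T $$ (i,j) + E $$ (i,n) * T $$ (n,j)"
        using i by (subst sum.remove[of _ i], simp, simp, subst sum.remove[of _ n])
          (auto simp: E_def intro!: sum.neutral)
      then show ?thesis using False i j by (auto simp: E_def T_def)
    qed
    finally show "?C $$ (i,j) = (E * T) $$ (i,j)" by simp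
  qed (auto simp: E_def T_def)
  moreover have "det E = - u n"
    by (subst det_upper_triangular_prod[where n = "Suc n"]) (auto simp: E_def)
  moreover have "det T = (\<Prod>i<n. d i) * v n"
    by (subst det_lower_triangular_prod[where n = "Suc n"]) (auto simp: T_def lessThan_Suc)
  ultimately show ?thesis
    by (simp add: det_mult[of _ "Suc n"] E_def T_def)
qed

lemma det_diag_minus_rank_one:
  fixes d u v :: "nat \<Rightarrow> 'a::comm_ring_1"
  shows "det (mat n n (\<lambda>(i,j). (if i = j then d i else 0) - u i * v j))
     = (\<Prod>i<n. d i) - (\<Sum>k<n. u k * v k * (\<Prod>i\<in>{..<n}-{k}. d i))"
proof (induction n)
  case 0
  then show ?case by simp
next
  case (Suc n)
  let ?f = "\<lambda>(i,j). (if i = j then d i else 0) - u i * v j"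
  let ?B = "mat (Suc n) (Suc n) (\<lambda>(i,j). if i = n then (if j = n then d n else 0) else ?f (i,j))"
  let ?C = "mat (Suc n) (Suc n) (\<lambda>(i,j). if i = n then - u n * v j
            else (if i = j then d i else 0) - u i * v j)"
  have "det (mat (Suc n) (Suc n) ?f) = det ?B + det ?C"
    by (rule det_row_additive[where k = n]) auto
  moreover have "det ?B = d n * det (mat n n ?f)"
  proof -
    have "det ?B = (\<Sum>j<Suc n. ?B $$ (n,j) * cofactor ?B n j)"
      by (rule laplace_expansion_row) auto
    also have "\<dots> = d n * cofactor ?B n n"
      by (subst sum.remove[of _ n]) auto
    also have "mat_delete ?B n n = mat n n ?f"
      unfolding mat_delete_def by (auto intro!: eq_matI)
    then have "cofactor ?B n n = det (mat n n ?f)" unfolding cofactor_def by simp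
    finally show ?thesis .
  qed
  moreover have "det ?C = - u n * ((\<Prod>i<n. d i) * v n)"
    by (rule det_diag_rank_one_last_row)
  moreover have "(\<Sum>k<Suc n. u k * v k * (\<Prod>i\<in>{..<Suc n}-{k}. d i))
     = d n * (\<Sum>k<n. u k * v k * (\<Prod>i\<in>{..<n}-{k}. d i)) + u n * v n * (\<Prod>i<n. d i)"
  proof -
    have "{..<Suc n}-{k} = insert n ({..<n}-{k})" if "k < n" for k
      using that by auto
    then have "(\<Sum>k<n. u k * v k * (\<Prod>i\<in>{..<Suc n}-{k}. d i))
        = d n * (\<Sum>k<n. u k * v k * (\<Prod>i\<in>{..<n}-{k}. d i))"
      by (auto simp: sum_distrib_left mult.left_commute intro!: sum.cong)
    moreover have "{..<Suc n}-{n} = {..<n}" by auto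
    ultimately show ?thesis by simp
  qed
  ultimately show ?case using Suc.IH
    by (simp add: lessThan_Suc algebra_simps)
qed

lemma prod_one_plus_eq_sum_Pow:
  fixes z :: "'b \<Rightarrow> 'a::comm_ring_1"
  assumes "finite A"
  shows "(\<Prod>i\<in>A. 1 + z i) = (\<Sum>S\<in>Pow A. \<Prod>i\<in>S. z i)"
  using prod_add[OF assms, of z "\<lambda>_. 1"] by (simp add: add.commute)

lemma sum_mult_prod_one_plus_remove:
  fixes z :: "'b \<Rightarrow> 'a::comm_ring_1"
  assumes A: "finite A"
  shows "(\<Sum>k\<in>A. z k * (\<Prod>i\<in>A-{k}. 1 + z i)) = (\<Sum>S\<in>Pow A. of_nat (card S) * (\<Prod>i\<in>S. z i))"
proof -
  have "z k * (\<Prod>i\<in>A-{k}. 1 + z i) = (\<Sum>S\<in>{S \<in> Pow A. k \<in> S}. \<Prod>i\<in>S. z i)" if "k \<in> A" for k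
  proof -
    have "z k * (\<Prod>i\<in>A-{k}. 1 + z i) = (\<Sum>T\<in>Pow (A-{k}). z k * (\<Prod>i\<in>T. z i))"
      using A by (simp add: prod_one_plus_eq_sum_Pow sum_distrib_left)
    also have "\<dots> = (\<Sum>T\<in>Pow (A-{k}). \<Prod>i\<in>insert k T. z i)"
      using A by (intro sum.cong refl) (subst prod.insert, auto intro: rev_finite_subset)
    also have "\<dots> = (\<Sum>S\<in>{S \<in> Pow A. k \<in> S}. \<Prod>i\<in>S. z i)"
      by (rule sum.reindex_bij_witness[where i = "\<lambda>S. S - {k}" and j = "insert k"]) (use that in auto)
    finally show ?thesis .
  qed
  then have "(\<Sum>k\<in>A. z k * (\<Prod>i\<in>A-{k}. 1 + z i)) = (\<Sum>k\<in>A. \<Sum>S\<in>{S \<in> Pow A. k \<in> S}. \<Prod>i\<in>S. z i)"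
    by (rule sum.cong[OF refl])
  also have "\<dots> = (\<Sum>S\<in>Pow A. \<Sum>k\<in>{k \<in> A. k \<in> S}. \<Prod>i\<in>S. z i)"
    by (rule sum.swap_restrict) (simp_all add: A)
  also have "\<dots> = (\<Sum>S\<in>Pow A. of_nat (card S) * (\<Prod>i\<in>S. z i))"
    by (rule sum.cong) (auto simp: Collect_conj_eq Int_absorb1)
  finally show ?thesis .
qed

lemma R_poly_eq_sum_Pow:
  fixes z :: "nat \<Rightarrow> 'a::comm_ring_1"
  shows "R_poly m z = (\<Sum>S\<in>Pow {1..m}. (1 - 2 * of_nat (card S)) * (\<Prod>i\<in>S. z i))"
proof -
  let ?e = "\<lambda>l. (\<Sum>S \<in> {S. S \<subseteq> {1..m} \<and> card S = l}. \<Prod>i\<in>S. z i)"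
  have "(\<Sum>S\<in>Pow {1..m}. (1 - 2 * of_nat (card S)) * (\<Prod>i\<in>S. z i))
      = (\<Sum>l\<in>{0..m}. \<Sum>S\<in>{S \<in> Pow {1..m}. card S = l}. (1 - 2 * of_nat (card S)) * (\<Prod>i\<in>S. z i))"
    by (rule sum.group[symmetric]) (auto dest: card_mono[rotated])
  also have "\<dots> = (\<Sum>l\<in>{0..m}. (1 - 2 * of_nat l) * ?e l)"
    by (rule sum.cong) (auto simp: sum_distrib_left intro!: sum.cong)
  also have "\<dots> = ?e 0 + (\<Sum>l\<in>{1..m}. (1 - 2 * of_nat l) * ?e l)"
    by (simp add: sum.atLeast_Suc_atMost)
  also have "?e 0 = 1"
  proof -
    have "{S. S \<subseteq> {1..m} \<and> card S = 0} = {{}}" by (auto dest: finite_subset)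
    then show ?thesis by simp
  qed
  also have "(\<Sum>l\<in>{1..m}. (1 - 2 * of_nat l) * ?e l) = - (\<Sum>l = 1..m. of_nat (2*l - 1) * ?e l)"
    by (auto simp: sum_negf[symmetric] of_nat_diff algebra_simps intro!: sum.cong)
  finally show ?thesis unfolding R_poly_def by simp
qed

lemma R_poly_eq_prod_one_plus:
  fixes z :: "nat \<Rightarrow> 'a::comm_ring_1"
  shows "R_poly m z = (\<Prod>i\<in>{1..m}. 1 + z i) - 2 * (\<Sum>k\<in>{1..m}. z k * (\<Prod>i\<in>{1..m}-{k}. 1 + z i))"
proof -
  have "R_poly m z = (\<Sum>S\<in>Pow {1..m}. \<Prod>i\<in>S. z i) - 2 * (\<Sum>S\<in>Pow {1..m}. of_nat (card S) * (\<Prod>i\<in>S. z i))"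
    by (simp add: R_poly_eq_sum_Pow algebra_simps sum_subtractf sum_distrib_left)
  then show ?thesis
    using sum_mult_prod_one_plus_remove[of "{1..m}" z] prod_one_plus_eq_sum_Pow[of "{1..m}" z] by simp
qed

lemma index_mult_mat_block_identity:
  fixes K P :: "'a::comm_ring_1 mat"
  assumes K: "K \<in> carrier_mat n n" and P: "P \<in> carrier_mat n n" and r: "r < n" and c: "c < n"
    and K_row: "\<And>j. j < n \<Longrightarrow> \<not> Q j \<Longrightarrow> K $$ (r,j) = (if r = j then 1 else 0)"
    and P_rows: "\<And>j. j < n \<Longrightarrow> Q j \<Longrightarrow> P $$ (j,c) = (if j = c then 1 else 0)"
  shows "(K * P) $$ (r,c) = (if Q c then K $$ (r,c) else 0) + (if Q r then 0 else P $$ (r,c))"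
proof -
  have "(K * P) $$ (r,c) = (\<Sum>k<n. (if k = c then (if Q c then K $$ (r,c) else 0) else 0)
         + (if k = r then (if Q r then 0 else P $$ (r,c)) else 0))"
    unfolding index_mult_mat_sum[OF K P r c]
  proof (rule sum.cong)
    fix k assume "k \<in> {..<n}"
    then have k: "k < n" by simp
    show "K $$ (r,k) * P $$ (k,c) = (if k = c then (if Q c then K $$ (r,c) else 0) else 0)
         + (if k = r then (if Q r then 0 else P $$ (r,c)) else 0)"
      by (cases "Q k") (auto simp: K_row[OF k] P_rows[OF k])
  qed simp
  also have "\<dots> = (if Q c then K $$ (r,c) else 0) + (if Q r then 0 else P $$ (r,c))"
    using r c by (simp add: sum.distrib)
  finally show ?thesis .
qed

definition pair_shear_mat :: "nat \<Rightarrow> 'a::comm_ring_1 \<Rightarrow> 'a mat" where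
  "pair_shear_mat m a = mat (2*m+1) (2*m+1)
     (\<lambda>(i,j). (if i = j then 1 else 0) + (if is_pos m i \<and> j = i + m then a else 0))"

lemma pair_shear_mat_carrier [simp]: "pair_shear_mat m a \<in> carrier_mat (2*m+1) (2*m+1)"
  by (simp add: pair_shear_mat_def)

lemma det_pair_shear_mat: "det (pair_shear_mat m a) = 1"
  by (subst det_upper_triangular_prod[OF _ pair_shear_mat_carrier])
    (auto simp: pair_shear_mat_def is_pos_def)

lemma index_pair_shear_mat_mult:
  assumes X: "X \<in> carrier_mat (2*m+1) (2*m+1)" and r: "r < 2*m+1" and c: "c < 2*m+1"
  shows "(pair_shear_mat m a * X) $$ (r,c) = X $$ (r,c) + (if is_pos m r then a * X $$ (r + m, c) else 0)"
proof -
  have "(pair_shear_mat m a * X) $$ (r,c)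
      = (\<Sum>k<2*m+1. (if k = r then X $$ (k,c) else 0) + (if k = r + m then (if is_pos m r then a * X $$ (k,c) else 0) else 0))"
    unfolding index_mult_mat_sum[OF pair_shear_mat_carrier X r c]
    by (rule sum.cong) (use r in \<open>auto simp: pair_shear_mat_def distrib_right\<close>)
  also have "\<dots> = X $$ (r,c) + (if is_pos m r then a * X $$ (r + m, c) else 0)"
    unfolding sum.distrib sum.delta using r by (auto simp: is_pos_def mult_2)
  finally show ?thesis .
qed

lemma index_mult_pair_shear_mat:
  assumes X: "X \<in> carrier_mat (2*m+1) (2*m+1)" and r: "r < 2*m+1" and c: "c < 2*m+1"
  shows "(X * pair_shear_mat m a) $$ (r,c) = X $$ (r,c) + (if m < c then a * X $$ (r, c - m) else 0)"
proof -
  have "(X * pair_shear_mat m a) $$ (r,c)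
      = (\<Sum>k<2*m+1. (if k = c then X $$ (r,k) else 0) + (if k = c - m then (if m < c then a * X $$ (r,k) else 0) else 0))"
    unfolding index_mult_mat_sum[OF X pair_shear_mat_carrier r c]
    by (rule sum.cong) (use c in \<open>auto simp: pair_shear_mat_def is_pos_def distrib_left\<close>)
  also have "\<dots> = X $$ (r,c) + (if m < c then a * X $$ (r, c - m) else 0)"
    unfolding sum.distrib sum.delta using c by auto
  finally show ?thesis .
qed

definition diag_rank_one_factor :: "nat \<Rightarrow> (nat \<Rightarrow> 'a::comm_ring_1) \<Rightarrow> 'a mat" where
  "diag_rank_one_factor m z = mat (2*m+1) (2*m+1)
     (\<lambda>(i,j). (if i = j then (if is_pos m i then 1 + z i else 1) else 0)
        - (if i = 0 then 1 else if i \<le> m then 2 else 0) * (if is_pos m j then z j else 0))"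

definition lower_triangular_factor :: "nat \<Rightarrow> (nat \<Rightarrow> 'a::comm_ring_1) \<Rightarrow> 'a mat" where
  "lower_triangular_factor m z = mat (2*m+1) (2*m+1)
     (\<lambda>(i,j). if i = j then (if m < i then 1 - z (i - m) else 1)
        else if is_pos m j \<and> m < i \<and> i \<noteq> j + m then - z j else 0)"

lemma pair_shear_I_minus_A_mat:
  "pair_shear_mat m 1 * (1\<^sub>m (2*m+1) - A_mat m z) * pair_shear_mat m (-1)
     = diag_rank_one_factor m z * lower_triangular_factor m z"
  (is "?S * ?M * ?S' = ?K * ?P")
proof (rule eq_matI)
  fix r c assume "r < dim_row (?K * ?P)" "c < dim_col (?K * ?P)"
  then have r: "r < 2*m+1" and c: "c < 2*m+1"
    by (simp_all add: diag_rank_one_factor_def lower_triangular_factor_def)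
  have M: "?M \<in> carrier_mat (2*m+1) (2*m+1)" by (auto simp: A_mat_def)
  define e where "e i j = (if i = j then 1 else 0) - A_entry m z i j
    + (if is_pos m i then (if i + m = j then 1 else 0) - A_entry m z (i + m) j else 0)" for i j
  have SM: "(?S * ?M) $$ (i,j) = e i j" if "i < 2*m+1" "j < 2*m+1" for i j
    using index_pair_shear_mat_mult[OF M that, of 1] that by (auto simp: A_mat_def e_def is_pos_def)
  have "(?S * ?M * ?S') $$ (r,c) = e r c - (if m < c then e r (c - m) else 0)"
    using index_mult_pair_shear_mat[OF mult_carrier_mat[OF pair_shear_mat_carrier[of m 1] M] r c, of "-1"]
      SM[OF r c] SM[OF r, of "c - m"] c by auto
  also have "\<dots> = (if is_pos m c then ?K $$ (r,c) else 0) + (if is_pos m r then 0 else ?P $$ (r,c))"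
    using r c by (auto simp: e_def A_entry_def gen_idx_def is_pos_def
        diag_rank_one_factor_def lower_triangular_factor_def)
  also have "\<dots> = (?K * ?P) $$ (r,c)"
    by (rule index_mult_mat_block_identity[symmetric, of _ "2*m+1"])
      (use r c in \<open>auto simp: diag_rank_one_factor_def lower_triangular_factor_def is_pos_def\<close>)
  finally show "(?S * ?M * ?S') $$ (r,c) = (?K * ?P) $$ (r,c)" .
qed (simp_all add: diag_rank_one_factor_def lower_triangular_factor_def pair_shear_mat_def)

lemma det_diag_rank_one_factor:
  "det (diag_rank_one_factor m z)
     = (\<Prod>i\<in>{1..m}. 1 + z i) - 2 * (\<Sum>k\<in>{1..m}. z k * (\<Prod>i\<in>{1..m}-{k}. 1 + z i))"
proof -
  define d where "d i = (if is_pos m i then 1 + z i else 1)" for i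
  have pos: "{i \<in> {..<2*m+1} - K. is_pos m i} = {1..m} - K" for K
    by (auto simp: is_pos_def)
  have prod_d: "(\<Prod>i\<in>{..<2*m+1} - K. d i) = (\<Prod>i\<in>{1..m} - K. 1 + z i)" for K
  proof -
    have "(\<Prod>i\<in>{..<2*m+1} - K. d i) = (\<Prod>i\<in>{i \<in> {..<2*m+1} - K. is_pos m i}. 1 + z i)"
      unfolding d_def by (rule prod.inter_filter[symmetric]) simp
    then show ?thesis unfolding pos .
  qed
  define u :: "nat \<Rightarrow> 'a" where "u i = (if i = 0 then 1 else if i \<le> m then 2 else 0)" for i
  define v where "v j = (if is_pos m j then z j else 0)" for j
  have "det (diag_rank_one_factor m z)
      = (\<Prod>i<2*m+1. d i) - (\<Sum>k<2*m+1. u k * v k * (\<Prod>i\<in>{..<2*m+1}-{k}. d i))"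
    unfolding diag_rank_one_factor_def d_def u_def v_def by (rule det_diag_minus_rank_one)
  also have "(\<Sum>k<2*m+1. u k * v k * (\<Prod>i\<in>{..<2*m+1}-{k}. d i))
      = (\<Sum>k<2*m+1. if is_pos m k then 2 * z k * (\<Prod>i\<in>{1..m}-{k}. 1 + z i) else 0)"
    using prod_d by (intro sum.cong) (auto simp: u_def v_def is_pos_def)
  also have "\<dots> = (\<Sum>k\<in>{1..m}. 2 * z k * (\<Prod>i\<in>{1..m}-{k}. 1 + z i))"
    unfolding sum.inter_filter[symmetric, OF finite_lessThan] pos[of "{}", unfolded Diff_empty] ..
  finally show ?thesis
    using prod_d[of "{}"] by (simp add: sum_distrib_left mult.assoc)
qed

lemma det_lower_triangular_factor:
  "det (lower_triangular_factor m z) = (\<Prod>i\<in>{1..m}. 1 - z i)"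
proof -
  have "det (lower_triangular_factor m z) = (\<Prod>i<2*m+1. if m < i then 1 - z (i - m) else 1)"
    by (subst det_lower_triangular_prod[where n = "2*m+1"])
      (auto simp: lower_triangular_factor_def is_pos_def intro!: prod.cong)
  also have "\<dots> = (\<Prod>i\<in>{i \<in> {..<2*m+1}. m < i}. 1 - z (i - m))"
    by (rule prod.inter_filter[symmetric]) simp
  also have "\<dots> = (\<Prod>i\<in>{1..m}. 1 - z i)"
    by (rule prod.reindex_bij_witness[where i = "\<lambda>i. i + m" and j = "\<lambda>i. i - m"]) auto
  finally show ?thesis .
qed

theorem lemma1:
  fixes m :: nat and z :: "nat \<Rightarrow> 'a::comm_ring_1"
  assumes "m \<ge> 2"
  shows "det (1\<^sub>m (2*m+1) - A_mat m z) = (\<Prod>i = 1..m. 1 - z i) * R_poly m z"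
proof -
  \<comment> \<open>the identity holds for every m\<close>
  have M: "1\<^sub>m (2*m+1) - A_mat m z \<in> carrier_mat (2*m+1) (2*m+1)"
    by (auto simp: A_mat_def)
  have "det (1\<^sub>m (2*m+1) - A_mat m z)
      = det (pair_shear_mat m 1 * (1\<^sub>m (2*m+1) - A_mat m z) * pair_shear_mat m (-1))"
    using det_mult[OF mult_carrier_mat[OF pair_shear_mat_carrier M] pair_shear_mat_carrier]
      det_mult[OF pair_shear_mat_carrier M]
    by (simp add: det_pair_shear_mat)
  also have "\<dots> = det (diag_rank_one_factor m z) * det (lower_triangular_factor m z)"
    unfolding pair_shear_I_minus_A_mat
    by (rule det_mult) (auto simp: diag_rank_one_factor_def lower_triangular_factor_def)
  also have "\<dots> = R_poly m z * (\<Prod>i = 1..m. 1 - z i)"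
    by (simp add: det_diag_rank_one_factor det_lower_triangular_factor R_poly_eq_prod_one_plus)
  finally show ?thesis by (simp add: mult.commute)
qed

end
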